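(* Let $(X,d,A)$ be a metric pair where $A$ is not isolated, and let $p\in[1,\infty]$. Then no element of $(\overline{D}_p(X,A),W_p)$ has a compact neighborhood. Hence $(\overline{D}_p(X,A),W_p)$ is not locally compact, and every compact subset of it has empty interior.
   Context: A metric on $X$ is a map $d:X\times X\to[0,\infty]$ with $d(x,x)=0$, symmetry and the triangle inequality (infinite distances allowed, $d(x,y)=0$ need not imply $x=y$); a metric pair $(X,d,A)$ is such a space with a closed subset $A$. Write $d(x,A)=\inf_{a\in A}d(x,a)$ and $A^\delta=\{x:d(x,A)<\delta\}$ for $\delta\in(0,\infty]$. $A$ is isolated if there is $\delta>0$ with $A^\delta=A$. $\overline{D}(X,A)$ is the set of countable formal sums $\hat\alpha=\sum_{i\in I}x_i$ of points of $X\setminus A$ (repetitions allowed); $0$ the empty sum. A matching of $\hat\alpha=\sum_{i\in I}x_i$, $\hat\beta=\sum_{j\in J}y_j$ is a formal sum $\sum_{k\in K}(x_k,y_{\varphi(k)})+\sum_{i\in I\setminus K}(x_i,z_i)+\sum_{j\in J\setminus\varphi(K)}(w_j,y_j)$ with $K\subset I$, $\varphi$ injective, $z_i,w_j\in A$; its $p$-cost is the $\ell^p$ norm (sup norm if $p=\infty$) of the distances of paired points; $W_p$ is the infimum of $p$-costs. $u_\delta(\alpha)$, $\ell_\delta(\alpha)$ are the restrictions of $\hat\alpha$ to $X\setminus A^\delta$ and to $A^\delta\setminus A$. For $p<\infty$, $\overline{D}_p(X,A)=\{\alpha: |u_\infty(\alpha)|<\infty,\ W_p(\ell_\infty(\alpha),0)<\infty\}$;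 $\overline{D}_\infty(X,A)=\{\alpha:|u_\delta(\alpha)|<\infty\ \forall\delta>0\}$. *)

theory Defs
  imports "HOL-Analysis.Analysis"
begin

text \<open>The ambient space X is the universe of the type 'a. Distances take values
 in [0,\<infinity>] (ennreal); d x y = 0 need not imply x = y.\<close>

definition emetric :: "('a \<Rightarrow> 'a \<Rightarrow> ennreal) \<Rightarrow> bool" where
  "emetric d \<longleftrightarrow> (\<forall>x. d x x = 0) \<and> (\<forall>x y. d x y = d y x)
      \<and> (\<forall>x y z. d x z \<le> d x y + d y z)"

definition setdist_pt :: "('a \<Rightarrow> 'a \<Rightarrow> ennreal) \<Rightarrow> 'a \<Rightarrow> 'a set \<Rightarrow> ennreal" where
  "setdist_pt d x A = (INF a\<in>A. d x a)"

definition eclosed :: "('a \<Rightarrow> 'a \<Rightarrow> ennreal) \<Rightarrow> 'a set \<Rightarrow> bool" where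
  "eclosed d A \<longleftrightarrow> (\<forall>x. setdist_pt d x A = 0 \<longrightarrow> x \<in> A)"

definition metric_pair :: "('a \<Rightarrow> 'a \<Rightarrow> ennreal) \<Rightarrow> 'a set \<Rightarrow> bool" where
  "metric_pair d A \<longleftrightarrow> emetric d \<and> eclosed d A"

definition thick :: "('a \<Rightarrow> 'a \<Rightarrow> ennreal) \<Rightarrow> 'a set \<Rightarrow> ennreal \<Rightarrow> 'a set" where
  "thick d A \<delta> = {x. setdist_pt d x A < \<delta>}"

definition isolated_set :: "('a \<Rightarrow> 'a \<Rightarrow> ennreal) \<Rightarrow> 'a set \<Rightarrow> bool" where
  "isolated_set d A \<longleftrightarrow> (\<exists>\<delta>>0. thick d A \<delta> = A)"

text \<open>A countable formal sum \<Sum>_{i\<in>I} x_i is represented by a countable index set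
 I \<subseteq> nat together with the family x (values outside I are irrelevant).\<close>
type_synonym 'a diagram = "nat set \<times> (nat \<Rightarrow> 'a)"

definition Dbar :: "'a set \<Rightarrow> 'a diagram set" where
  "Dbar A = {(I, x). \<forall>i\<in>I. x i \<notin> A}"

definition zero_diag :: "'a diagram" where
  "zero_diag = ({}, (\<lambda>_. undefined))"

definition restr :: "'a set \<Rightarrow> 'a diagram \<Rightarrow> 'a diagram" where
  "restr S \<alpha> = (fst \<alpha> \<inter> {i. snd \<alpha> i \<in> S}, snd \<alpha>)"

definition u_part :: "('a \<Rightarrow> 'a \<Rightarrow> ennreal) \<Rightarrow> 'a set \<Rightarrow> ennreal \<Rightarrow> 'a diagram \<Rightarrow> 'a diagram" where
  "u_part d A \<delta> \<alpha> = restr (- thick d A \<delta>) \<alpha>"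

definition l_part :: "('a \<Rightarrow> 'a \<Rightarrow> ennreal) \<Rightarrow> 'a set \<Rightarrow> ennreal \<Rightarrow> 'a diagram \<Rightarrow> 'a diagram" where
  "l_part d A \<delta> \<alpha> = restr (thick d A \<delta> - A) \<alpha>"

definition is_matching ::
  "'a set \<Rightarrow> 'a diagram \<Rightarrow> 'a diagram \<Rightarrow> nat set \<Rightarrow> (nat \<Rightarrow> nat) \<Rightarrow> (nat \<Rightarrow> 'a) \<Rightarrow> (nat \<Rightarrow> 'a) \<Rightarrow> bool"
  where
  "is_matching A \<alpha> \<beta> K \<phi> z w \<longleftrightarrow>
     K \<subseteq> fst \<alpha> \<and> inj_on \<phi> K \<and> \<phi> ` K \<subseteq> fst \<beta>
     \<and> (\<forall>i\<in>fst \<alpha> - K. z i \<in> A) \<and> (\<forall>j\<in>fst \<beta> - \<phi> ` K. w j \<in> A)"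

definition epow :: "ennreal \<Rightarrow> real \<Rightarrow> ennreal" where
  "epow s r = (if s = \<infinity> then \<infinity> else ennreal (enn2real s powr r))"

definition match_cost ::
  "('a \<Rightarrow> 'a \<Rightarrow> ennreal) \<Rightarrow> ennreal \<Rightarrow> 'a diagram \<Rightarrow> 'a diagram \<Rightarrow> nat set \<Rightarrow> (nat \<Rightarrow> nat)
     \<Rightarrow> (nat \<Rightarrow> 'a) \<Rightarrow> (nat \<Rightarrow> 'a) \<Rightarrow> ennreal" where
  "match_cost d p \<alpha> \<beta> K \<phi> z w =
     (let x = snd \<alpha>; y = snd \<beta>; I = fst \<alpha>; J = fst \<beta> in
      if p = \<infinity> then
        sup (SUP k\<in>K. d (x k) (y (\<phi> k)))
          (sup (SUP i\<in>I - K. d (x i) (z i)) (SUP j\<in>J - \<phi> ` K. d (w j) (y j)))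
      else
        (let q = enn2real p in
         epow ((\<Sum>\<^sub>\<infinity>k\<in>K. epow (d (x k) (y (\<phi> k))) q)
             + (\<Sum>\<^sub>\<infinity>i\<in>I - K. epow (d (x i) (z i)) q)
             + (\<Sum>\<^sub>\<infinity>j\<in>J - \<phi> ` K. epow (d (w j) (y j)) q)) (1 / q)))"

definition Wp :: "('a \<Rightarrow> 'a \<Rightarrow> ennreal) \<Rightarrow> 'a set \<Rightarrow> ennreal \<Rightarrow> 'a diagram \<Rightarrow> 'a diagram \<Rightarrow> ennreal" where
  "Wp d A p \<alpha> \<beta> =
     (INF (K, \<phi>, z, w) \<in> {(K, \<phi>, z, w). is_matching A \<alpha> \<beta> K \<phi> z w}.
        match_cost d p \<alpha> \<beta> K \<phi> z w)"

definition Dp :: "('a \<Rightarrow> 'a \<Rightarrow> ennreal) \<Rightarrow> 'a set \<Rightarrow> ennreal \<Rightarrow> 'a diagram set" where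
  "Dp d A p =
     (if p = \<infinity> then {\<alpha> \<in> Dbar A. \<forall>\<delta>>0. finite (fst (u_part d A \<delta> \<alpha>))}
      else {\<alpha> \<in> Dbar A. finite (fst (u_part d A \<infinity> \<alpha>))
                       \<and> Wp d A p (l_part d A \<infinity> \<alpha>) zero_diag < \<infinity>})"

definition Wp_topology :: "('a \<Rightarrow> 'a \<Rightarrow> ennreal) \<Rightarrow> 'a set \<Rightarrow> ennreal \<Rightarrow> 'a diagram topology" where
  "Wp_topology d A p = topology (\<lambda>U. U \<subseteq> Dp d A p \<and>
      (\<forall>\<alpha>\<in>U. \<exists>\<epsilon>>0. \<forall>\<beta>\<in>Dp d A p. Wp d A p \<alpha> \<beta> < \<epsilon> \<longrightarrow> \<beta> \<in> U))"

end

theory Submission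
  imports Defs
begin

text \<open>Suppose a compact set \<open>K\<close> contains a \<open>W\<^sub>p\<close>-ball around \<open>\<alpha>\<close>. As \<open>A\<close> is not isolated,
  there are points \<open>x \<notin> A\<close> with \<open>c = d(x, A)\<close> arbitrarily small, and adding \<open>N\<close> copies of such an
  \<open>x\<close> to \<open>\<alpha>\<close> moves it by at most \<open>N\<^sup>1\<^sup>/\<^sup>p 2c\<close> (by at most \<open>2c\<close> if \<open>p = \<infinity>\<close>), while creating \<open>N\<close>
  points at distance \<open>c\<close> from \<open>A\<close>. Compactness is contradicted by an increasing sequence of open
  sets covering \<open>D\<^sub>p\<close>: for \<open>p = \<infinity>\<close> the diagrams with fewer than \<open>t\<close> points at distance about \<open>c\<close>
  from \<open>A\<close>; for \<open>p < \<infinity>\<close> the diagrams with \<open>s\<^sup>p \<cdot> #{points at distance \<ge> \<gamma>s from A} < \<theta>\<close> at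
  all scales \<open>s \<le> 1/(n+1)\<close>, which every diagram eventually satisfies because the \<open>p\<close>-th powers of
  its distances to \<open>A\<close> are summable. \<open>K\<close> would lie in one of these sets, but for a suitable choice
  of \<open>x\<close> and \<open>N\<close> the diagram \<open>\<alpha> + N x\<close> lies in the ball and not in that set. Openness is checked
  directly on matchings, so no triangle inequality for \<open>W\<^sub>p\<close> is needed.\<close>

lemma openin_Wp_topology:
  "openin (Wp_topology d A p) U \<longleftrightarrow> U \<subseteq> Dp d A p \<and>
     (\<forall>\<alpha>\<in>U. \<exists>\<epsilon>>0. \<forall>\<beta>\<in>Dp d A p. Wp d A p \<alpha> \<beta> < \<epsilon> \<longrightarrow> \<beta> \<in> U)"
  (is "_ \<longleftrightarrow> ?open U")
proof -
  have "istopology ?open"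
    unfolding istopology_def
  proof (rule conjI; intro allI impI)
    fix S T assume S: "?open S" and T: "?open T"
    show "?open (S \<inter> T)"
    proof (intro conjI ballI)
      fix \<alpha> assume "\<alpha> \<in> S \<inter> T"
      then obtain e1 e2 :: ennreal where "0 < e1" "\<forall>\<beta>\<in>Dp d A p. Wp d A p \<alpha> \<beta> < e1 \<longrightarrow> \<beta> \<in> S"
        and "0 < e2" "\<forall>\<beta>\<in>Dp d A p. Wp d A p \<alpha> \<beta> < e2 \<longrightarrow> \<beta> \<in> T"
        using S T by blast
      then show "\<exists>\<epsilon>>0. \<forall>\<beta>\<in>Dp d A p. Wp d A p \<alpha> \<beta> < \<epsilon> \<longrightarrow> \<beta> \<in> S \<inter> T"
        by (intro exI[of _ "min e1 e2"]) auto
    qed (use S in blast)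
  next
    fix \<K> assume "\<forall>S\<in>\<K>. ?open S"
    then show "?open (\<Union>\<K>)"
      by (metis UnionE UnionI Union_least)
  qed
  then show ?thesis
    unfolding Wp_topology_def by simp
qed

lemma topspace_Wp_topology: "topspace (Wp_topology d A p) = Dp d A p"
proof -
  have "openin (Wp_topology d A p) (Dp d A p)"
    by (auto simp: openin_Wp_topology intro: exI[of _ 1])
  then show ?thesis
    by (auto simp: topspace_def openin_Wp_topology)
qed

lemma compactin_subset_incseq:
  assumes "compactin X K" "\<And>n. openin X (V n)" "incseq V" "K \<subseteq> (\<Union>n. V n)"
  obtains n where "K \<subseteq> V n"
proof -
  obtain F where F: "finite F" "F \<subseteq> range V" "K \<subseteq> \<Union>F"
    using assms(1,2,4) unfolding compactin_def by (metis imageE)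
  then obtain T where T: "finite T" "F = V ` T"
    by (meson finite_subset_image)
  have "K \<subseteq> V (Max (insert 0 T))"
  proof
    fix x assume "x \<in> K"
    then obtain t where "t \<in> T" "x \<in> V t" using F T by blast
    moreover have "t \<le> Max (insert 0 T)"
      using T(1) \<open>t \<in> T\<close> by simp
    ultimately show "x \<in> V (Max (insert 0 T))"
      using incseqD[OF assms(3)] by blast
  qed
  then show ?thesis
    using that by blast
qed

lemma epow_ennreal: "0 \<le> x \<Longrightarrow> epow (ennreal x) r = ennreal (x powr r)"
  by (simp add: epow_def)

lemma epow_less_top_iff: "epow s r < top \<longleftrightarrow> s < top"
  by (simp add: epow_def less_top)

lemma epow_mono:
  assumes "s \<le> t" "0 < r"
  shows "epow s r \<le> epow t r"
proof (cases "t = \<infinity>")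
  case False
  then have "s \<noteq> \<infinity>"
    using assms(1) by (metis infinity_ennreal_def top.extremum_unique)
  then show ?thesis
    using False assms by (auto simp: epow_def less_top intro!: ennreal_leI powr_mono2 enn2real_mono)
qed (simp add: epow_def)

lemma powr_le_epow:
  assumes "ennreal x \<le> s" "0 \<le> x" "0 < r"
  shows "ennreal (x powr r) \<le> epow s r"
  using epow_mono[OF assms(1,3)] by (simp add: epow_ennreal assms(2))

lemma epow_inverse_less_imp_less_powr:
  assumes "epow s (1/q) < ennreal \<rho>" "0 < q" "0 < \<rho>"
  shows "s < ennreal (\<rho> powr q)"
proof -
  obtain x where x: "s = ennreal x" "0 \<le> x"
    using assms(1) by (cases s) (auto simp: epow_def)
  then have "(x powr (1/q)) powr q < \<rho> powr q"
    using assms by (simp add: epow_ennreal ennreal_less_iff powr_less_mono2)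
  then show ?thesis
    using x assms(2,3) by (simp add: powr_powr ennreal_lessI)
qed

lemma one_le_enn2real: "1 \<le> p \<Longrightarrow> p \<noteq> \<infinity> \<Longrightarrow> 1 \<le> enn2real p"
  by (metis enn2real_1 enn2real_mono infinity_ennreal_def less_top)

lemma ennreal_obtain_real_below:
  assumes "0 < (\<epsilon>::ennreal)"
  obtains e where "0 < e" "ennreal e < \<epsilon>"
  using ennreal_rat_dense[OF assms] by (metis ennreal_less_zero_iff)

lemma finite_card_mult_le_infsum:
  fixes f :: "'b \<Rightarrow> ennreal"
  assumes "B \<subseteq> I" "\<And>i. i \<in> B \<Longrightarrow> b \<le> f i" "0 < b" "infsum f I < \<infinity>"
  shows "finite B" "of_nat (card B) * b \<le> infsum f I"
proof -
  have le: "infsum f B \<le> infsum f I"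
    using assms(1) by (intro infsum_mono_neutral) (auto intro: nonneg_summable_on_complete)
  show fin: "finite B"
  proof (rule ccontr)
    assume "infinite B"
    then have "infsum f B = \<infinity>"
      using assms(2,3) by (intro infsum_superconst_infinite_ennreal) auto
    then show False
      using le assms(4) by simp
  qed
  have "of_nat (card B) * b \<le> sum f B"
    using assms(2) by (metis sum_bounded_below)
  also have "\<dots> = infsum f B"
    using fin by simp
  finally show "of_nat (card B) * b \<le> infsum f I"
    using le by simp
qed

lemma infsum_tail_less:
  fixes f :: "'b \<Rightarrow> ennreal"
  assumes "infsum f L < \<infinity>" "0 < \<eta>"
  obtains F where "finite F" "F \<subseteq> L" "infsum f (L - F) < \<eta>"
proof -
  have "infsum f L < infsum f L + \<eta>"
    using assms by (simp add: ennreal_add_left_cancel_less[of _ 0, simplified] less_top)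
  also have "\<dots> = (SUP F\<in>{F. finite F \<and> F \<subseteq> L}. sum f F + \<eta>)"
    by (subst ennreal_SUP_add_left) (auto simp: nonneg_infsum_complete)
  finally obtain F where F: "finite F" "F \<subseteq> L" "infsum f L < sum f F + \<eta>"
    by (auto simp: less_SUP_iff)
  have "sum f F + infsum f (L - F) = infsum f L"
    using F(1,2) infsum_Un_disjoint[of f F "L - F"] by (simp add: Un_absorb1 nonneg_summable_on_complete)
  also have "\<dots> < sum f F + \<eta>"
    by (fact F(3))
  finally show ?thesis
    using that F(1,2) by (simp add: ennreal_add_left_cancel_less)
qed

lemma infsum_obtain_sparse_tail:
  fixes f :: "'b \<Rightarrow> ennreal"
  assumes "infsum f L < \<infinity>" "0 < \<eta>"
  obtains F where "finite F" "F \<subseteq> L"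
    "\<And>b. 0 < b \<Longrightarrow> finite {i\<in>L - F. b \<le> f i} \<and> of_nat (card {i\<in>L - F. b \<le> f i}) * b < \<eta>"
proof -
  obtain F where F: "finite F" "F \<subseteq> L" "infsum f (L - F) < \<eta>"
    using assms by (rule infsum_tail_less)
  have "infsum f (L - F) \<le> infsum f L"
    by (intro infsum_mono_neutral) (auto intro: nonneg_summable_on_complete)
  then have fin: "infsum f (L - F) < \<infinity>"
    using assms(1) by (rule le_less_trans)
  have "finite {i\<in>L - F. b \<le> f i} \<and> of_nat (card {i\<in>L - F. b \<le> f i}) * b < \<eta>" if "0 < b" for b
  proof -
    have "{i\<in>L - F. b \<le> f i} \<subseteq> L - F" "\<And>i. i \<in> {i\<in>L - F. b \<le> f i} \<Longrightarrow> b \<le> f i"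
      by auto
    note sparse = finite_card_mult_le_infsum[OF this that fin]
    show ?thesis
      using sparse(1) order_le_less_trans[OF sparse(2) F(3)] by blast
  qed
  then show ?thesis
    using that F(1,2) by blast
qed

lemma setdist_pt_le: "a \<in> A \<Longrightarrow> setdist_pt d x A \<le> d x a"
  unfolding setdist_pt_def by (rule INF_lower)

lemma setdist_pt_lessE:
  assumes "setdist_pt d x A < r"
  obtains a where "a \<in> A" "d x a < r"
  using assms unfolding setdist_pt_def by (auto simp: INF_less_iff)

lemma setdist_pt_triangle:
  assumes "emetric d"
  shows "setdist_pt d x A \<le> d x y + setdist_pt d y A"
proof (cases "d x y = \<infinity>")
  case False
  have "setdist_pt d x A - d x y \<le> d y a" if "a \<in> A" for a
  proof -
    have "setdist_pt d x A \<le> d x y + d y a"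
      using setdist_pt_le[OF that, of d x] assms unfolding emetric_def by (meson order_trans)
    then show ?thesis
      using False by (simp add: ennreal_minus_le_iff)
  qed
  then have "setdist_pt d x A - d x y \<le> setdist_pt d y A"
    unfolding setdist_pt_def[of d y] by (rule INF_greatest)
  then show ?thesis
    using False by (simp add: ennreal_minus_le_iff)
qed simp

lemma exists_point_near_A:
  assumes "metric_pair d A" "\<not> isolated_set d A" "0 < e"
  obtains x c where "x \<notin> A" "setdist_pt d x A = ennreal c" "0 < c" "c < e"
proof -
  have "setdist_pt d a A = 0" if "a \<in> A" for a
    using setdist_pt_le[OF that, of d a] assms(1) by (simp add: metric_pair_def emetric_def)
  then have "A \<subseteq> thick d A (ennreal e)"
    using assms(3) by (auto simp: thick_def)
  moreover have "thick d A (ennreal e) \<noteq> A"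
    using assms(2,3) unfolding isolated_set_def by (metis ennreal_eq_0_iff not_gr_zero not_le)
  ultimately obtain x where x: "x \<in> thick d A (ennreal e)" "x \<notin> A"
    by blast
  then have lt: "setdist_pt d x A < ennreal e"
    by (simp add: thick_def)
  then obtain c where c: "setdist_pt d x A = ennreal c" "0 \<le> c"
    by (cases "setdist_pt d x A") auto
  moreover have "setdist_pt d x A \<noteq> 0"
    using x(2) assms(1) by (auto simp: metric_pair_def eclosed_def)
  ultimately show ?thesis
    using that[OF x(2)] lt by (simp add: ennreal_less_iff)
qed

lemma Wp_lessE:
  assumes "Wp d A p \<zeta> \<beta> < e"
  obtains K \<phi> z w where "is_matching A \<zeta> \<beta> K \<phi> z w" "match_cost d p \<zeta> \<beta> K \<phi> z w < e"
  using assms unfolding Wp_def INF_less_iff by auto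

lemma Wp_le_match_cost:
  "is_matching A \<zeta> \<beta> K \<phi> z w \<Longrightarrow> Wp d A p \<zeta> \<beta> \<le> match_cost d p \<zeta> \<beta> K \<phi> z w"
  unfolding Wp_def by (rule INF_lower2[of "(K, \<phi>, z, w)"]) auto

lemma match_cost_inf_lessD:
  assumes "match_cost d \<infinity> \<zeta> \<beta> K \<phi> z w < e"
  shows "\<forall>k\<in>K. d (snd \<zeta> k) (snd \<beta> (\<phi> k)) < e"
    and "\<forall>j\<in>fst \<beta> - \<phi> ` K. d (w j) (snd \<beta> j) < e"
proof -
  have "sup (SUP k\<in>K. d (snd \<zeta> k) (snd \<beta> (\<phi> k)))
      (sup (SUP i\<in>fst \<zeta> - K. d (snd \<zeta> i) (z i)) (SUP j\<in>fst \<beta> - \<phi> ` K. d (w j) (snd \<beta> j))) < e"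
    using assms by (simp add: match_cost_def Let_def)
  then have "(SUP k\<in>K. d (snd \<zeta> k) (snd \<beta> (\<phi> k))) < e"
    and "(SUP j\<in>fst \<beta> - \<phi> ` K. d (w j) (snd \<beta> j)) < e"
    by (meson order_le_less_trans sup_ge1 sup_ge2)+
  then show "\<forall>k\<in>K. d (snd \<zeta> k) (snd \<beta> (\<phi> k)) < e"
    and "\<forall>j\<in>fst \<beta> - \<phi> ` K. d (w j) (snd \<beta> j) < e"
    by (auto dest: SUP_lessD)
qed

lemma card_costly_pairs_le:
  assumes "p \<noteq> \<infinity>" "0 < enn2real p" "match_cost d p \<zeta> \<beta> K \<phi> z w < ennreal \<rho>" "0 < \<rho>" "0 < \<tau>"
  defines "B1 \<equiv> {k\<in>K. ennreal \<tau> \<le> d (snd \<zeta> k) (snd \<beta> (\<phi> k))}"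
    and "B2 \<equiv> {j\<in>fst \<beta> - \<phi> ` K. ennreal \<tau> \<le> d (w j) (snd \<beta> j)}"
  shows "finite B1" "finite B2"
    "real (card B1 + card B2) * \<tau> powr enn2real p \<le> \<rho> powr enn2real p"
proof -
  define q where "q = enn2real p"
  define S1 where "S1 = (\<Sum>\<^sub>\<infinity>k\<in>K. epow (d (snd \<zeta> k) (snd \<beta> (\<phi> k))) q)"
  define S2 where "S2 = (\<Sum>\<^sub>\<infinity>i\<in>fst \<zeta> - K. epow (d (snd \<zeta> i) (z i)) q)"
  define S3 where "S3 = (\<Sum>\<^sub>\<infinity>j\<in>fst \<beta> - \<phi> ` K. epow (d (w j) (snd \<beta> j)) q)"
  have q: "0 < q"
    using assms(2) by (simp add: q_def)
  have "epow (S1 + S2 + S3) (1/q) < ennreal \<rho>"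
    using assms(1,3) by (simp add: match_cost_def Let_def S1_def S2_def S3_def q_def)
  then have tot: "S1 + S2 + S3 < ennreal (\<rho> powr q)"
    using epow_inverse_less_imp_less_powr q assms(4) by blast
  have "S1 \<le> S1 + S2 + S3" "S3 \<le> S1 + S2 + S3"
    by (simp_all add: add_increasing2 add_increasing)
  then have fin13: "S1 < \<infinity>" "S3 < \<infinity>"
    using tot ennreal_less_top[of "\<rho> powr q"] unfolding infinity_ennreal_def by order+
  have pos: "0 < ennreal (\<tau> powr q)"
    using assms(5) by simp
  have B1_le: "ennreal (\<tau> powr q) \<le> epow (d (snd \<zeta> k) (snd \<beta> (\<phi> k))) q" if "k \<in> B1" for k
    using that assms(5) q by (auto simp: B1_def intro: powr_le_epow)
  have B2_le: "ennreal (\<tau> powr q) \<le> epow (d (w j) (snd \<beta> j)) q" if "j \<in> B2" for j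
    using that assms(5) q by (auto simp: B2_def intro: powr_le_epow)
  have "B1 \<subseteq> K" "B2 \<subseteq> fst \<beta> - \<phi> ` K"
    by (auto simp: B1_def B2_def)
  have B1: "finite B1" "of_nat (card B1) * ennreal (\<tau> powr q) \<le> S1"
    using finite_card_mult_le_infsum[where B=B1 and I=K and f="\<lambda>k. epow (d (snd \<zeta> k) (snd \<beta> (\<phi> k))) q"]
      \<open>B1 \<subseteq> K\<close> B1_le pos fin13(1) unfolding S1_def by blast+
  have B2: "finite B2" "of_nat (card B2) * ennreal (\<tau> powr q) \<le> S3"
    using finite_card_mult_le_infsum[where B=B2 and I="fst \<beta> - \<phi> ` K" and f="\<lambda>j. epow (d (w j) (snd \<beta> j)) q"]
      \<open>B2 \<subseteq> _\<close> B2_le pos fin13(2) unfolding S3_def by blast+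
  have "of_nat (card B1) * ennreal (\<tau> powr q) + of_nat (card B2) * ennreal (\<tau> powr q) \<le> S1 + S3"
    using B1(2) B2(2) by (rule add_mono)
  also have "\<dots> \<le> S1 + S2 + S3"
    by (simp add: add_right_mono add_increasing2)
  finally have "ennreal (real (card B1 + card B2) * \<tau> powr q) < ennreal (\<rho> powr q)"
    using tot by (simp add: ennreal_mult' ennreal_of_nat_eq_real_of_nat distrib_right)
  then show "real (card B1 + card B2) * \<tau> powr enn2real p \<le> \<rho> powr enn2real p"
    by (simp add: ennreal_less_iff q_def)
  show "finite B1" "finite B2"
    by (fact B1(1) B2(1))+
qed

lemma fst_u_part: "fst (u_part d A \<delta> \<zeta>) = {i\<in>fst \<zeta>. \<delta> \<le> setdist_pt d (snd \<zeta> i) A}"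
  by (auto simp: u_part_def restr_def thick_def)

lemma u_part_antimono: "\<delta> \<le> \<delta>' \<Longrightarrow> fst (u_part d A \<delta>' \<zeta>) \<subseteq> fst (u_part d A \<delta> \<zeta>)"
  by (auto simp: fst_u_part)

lemma u_part_subset_matching:
  assumes em: "emetric d" and m: "is_matching A \<zeta> \<beta> K \<phi> z w"
  shows "fst (u_part d A (r + \<tau>) \<beta>) \<subseteq> \<phi> ` fst (u_part d A r \<zeta>)
     \<union> \<phi> ` {k\<in>K. \<tau> \<le> d (snd \<zeta> k) (snd \<beta> (\<phi> k))} \<union> {j\<in>fst \<beta> - \<phi> ` K. \<tau> \<le> d (w j) (snd \<beta> j)}"
proof
  fix j assume "j \<in> fst (u_part d A (r + \<tau>) \<beta>)"
  then have j: "j \<in> fst \<beta>" "r + \<tau> \<le> setdist_pt d (snd \<beta> j) A"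
    by (auto simp: fst_u_part)
  have sym: "d x y = d y x" for x y
    using em by (simp add: emetric_def)
  show "j \<in> \<phi> ` fst (u_part d A r \<zeta>) \<union> \<phi> ` {k\<in>K. \<tau> \<le> d (snd \<zeta> k) (snd \<beta> (\<phi> k))}
      \<union> {j\<in>fst \<beta> - \<phi> ` K. \<tau> \<le> d (w j) (snd \<beta> j)}"
  proof (cases "j \<in> \<phi> ` K")
    case True
    then obtain k where k: "k \<in> K" "j = \<phi> k"
      by blast
    have "\<tau> \<le> d (snd \<zeta> k) (snd \<beta> j) \<or> r \<le> setdist_pt d (snd \<zeta> k) A"
    proof (rule ccontr)
      assume "\<not> ?thesis"
      then have "d (snd \<beta> j) (snd \<zeta> k) + setdist_pt d (snd \<zeta> k) A < \<tau> + r"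
        by (simp add: add_strict_mono sym not_le)
      then have "setdist_pt d (snd \<beta> j) A < r + \<tau>"
        using setdist_pt_triangle[OF em] by (metis add.commute order_le_less_trans)
      then show False
        using j(2) by simp
    qed
    moreover have "k \<in> fst \<zeta>"
      using k m by (auto simp: is_matching_def)
    ultimately show ?thesis
      using k by (auto simp: fst_u_part)
  next
    case False
    then have "w j \<in> A"
      using j(1) m by (auto simp: is_matching_def)
    have "\<tau> \<le> d (w j) (snd \<beta> j)"
    proof (rule ccontr)
      assume "\<not> ?thesis"
      then have "setdist_pt d (snd \<beta> j) A < \<tau>"
        using setdist_pt_le[OF \<open>w j \<in> A\<close>, of d "snd \<beta> j"] by (simp add: sym not_le)
      moreover have "\<tau> \<le> r + \<tau>"
        by (simp add: add_increasing)
      ultimately show False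
        using j(2) by order
    qed
    then show ?thesis
      using j(1) False by blast
  qed
qed

lemma card_u_part_matching_le:
  assumes em: "emetric d" and m: "is_matching A \<zeta> \<beta> K \<phi> z w"
    and fin: "finite (fst (u_part d A r \<zeta>))" "finite {k\<in>K. \<tau> \<le> d (snd \<zeta> k) (snd \<beta> (\<phi> k))}"
      "finite {j\<in>fst \<beta> - \<phi> ` K. \<tau> \<le> d (w j) (snd \<beta> j)}"
  shows "card (fst (u_part d A (r + \<tau>) \<beta>)) \<le> card (fst (u_part d A r \<zeta>))
    + card {k\<in>K. \<tau> \<le> d (snd \<zeta> k) (snd \<beta> (\<phi> k))} + card {j\<in>fst \<beta> - \<phi> ` K. \<tau> \<le> d (w j) (snd \<beta> j)}"
    (is "card ?V \<le> card ?U + card ?B1 + card ?B2")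
proof -
  have "card ?V \<le> card (\<phi> ` ?U \<union> \<phi> ` ?B1 \<union> ?B2)"
    by (rule card_mono) (use fin u_part_subset_matching[OF em m] in simp_all)
  also have "\<dots> \<le> card (\<phi> ` ?U) + card (\<phi> ` ?B1) + card ?B2"
    using card_Un_le[of "\<phi> ` ?U \<union> \<phi> ` ?B1" ?B2] card_Un_le[of "\<phi> ` ?U" "\<phi> ` ?B1"] by linarith
  also have "\<dots> \<le> card ?U + card ?B1 + card ?B2"
    using card_image_le[OF fin(1), of \<phi>] card_image_le[OF fin(2), of \<phi>] by linarith
  finally show ?thesis .
qed

lemma snd_l_part [simp]: "snd (l_part d A \<delta> \<zeta>) = snd \<zeta>"
  by (simp add: l_part_def restr_def)

lemma fst_l_part_top:
  "fst (l_part d A top \<zeta>) = {i\<in>fst \<zeta>. setdist_pt d (snd \<zeta> i) A < top \<and> snd \<zeta> i \<notin> A}"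
  by (auto simp: l_part_def restr_def thick_def)

lemma DbarD: "\<zeta> \<in> Dbar A \<Longrightarrow> i \<in> fst \<zeta> \<Longrightarrow> snd \<zeta> i \<notin> A"
  by (cases \<zeta>) (auto simp: Dbar_def)

lemma Dp_subset_Dbar: "Dp d A p \<subseteq> Dbar A"
  by (auto simp: Dp_def)

lemma Wp_zero_diag_less_top_iff:
  assumes "p \<noteq> \<infinity>"
  shows "Wp d A p \<beta> zero_diag < \<infinity> \<longleftrightarrow>
    (\<exists>z. (\<forall>i\<in>fst \<beta>. z i \<in> A) \<and> (\<Sum>\<^sub>\<infinity>i\<in>fst \<beta>. epow (d (snd \<beta> i) (z i)) (enn2real p)) < \<infinity>)"
proof
  assume "Wp d A p \<beta> zero_diag < \<infinity>"
  then obtain K \<phi> z w where m: "is_matching A \<beta> zero_diag K \<phi> z w"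
    and c: "match_cost d p \<beta> zero_diag K \<phi> z w < \<infinity>"
    by (rule Wp_lessE)
  have "K = {}"
    using m by (auto simp: is_matching_def zero_diag_def)
  then show "\<exists>z. (\<forall>i\<in>fst \<beta>. z i \<in> A) \<and> (\<Sum>\<^sub>\<infinity>i\<in>fst \<beta>. epow (d (snd \<beta> i) (z i)) (enn2real p)) < \<infinity>"
    using m c assms by (auto simp: is_matching_def match_cost_def zero_diag_def Let_def epow_less_top_iff)
next
  assume "\<exists>z. (\<forall>i\<in>fst \<beta>. z i \<in> A) \<and> (\<Sum>\<^sub>\<infinity>i\<in>fst \<beta>. epow (d (snd \<beta> i) (z i)) (enn2real p)) < \<infinity>"
  then obtain z where "\<forall>i\<in>fst \<beta>. z i \<in> A"
    and sum: "(\<Sum>\<^sub>\<infinity>i\<in>fst \<beta>. epow (d (snd \<beta> i) (z i)) (enn2real p)) < \<infinity>"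
    by blast
  then have "is_matching A \<beta> zero_diag {} id z z"
    by (simp add: is_matching_def zero_diag_def)
  then have "Wp d A p \<beta> zero_diag \<le> match_cost d p \<beta> zero_diag {} id z z"
    by (rule Wp_le_match_cost)
  also have "\<dots> < \<infinity>"
    using sum assms by (simp add: match_cost_def zero_diag_def Let_def epow_less_top_iff)
  finally show "Wp d A p \<beta> zero_diag < \<infinity>" .
qed

lemma mem_Dp_iff:
  assumes "p \<noteq> \<infinity>"
  shows "\<zeta> \<in> Dp d A p \<longleftrightarrow> \<zeta> \<in> Dbar A \<and> finite (fst (u_part d A \<infinity> \<zeta>)) \<and>
    (\<exists>z. (\<forall>i\<in>fst (l_part d A \<infinity> \<zeta>). z i \<in> A) \<and>
       (\<Sum>\<^sub>\<infinity>i\<in>fst (l_part d A \<infinity> \<zeta>). epow (d (snd \<zeta> i) (z i)) (enn2real p)) < \<infinity>)"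
  using Wp_zero_diag_less_top_iff[OF assms, of d A "l_part d A \<infinity> \<zeta>"] assms by (simp add: Dp_def)

lemma zero_diag_in_Dp: "zero_diag \<in> Dp d A p"
proof (cases "p = \<infinity>")
  case False
  have "fst (l_part d A \<infinity> zero_diag) = {}" "fst (u_part d A \<infinity> zero_diag) = {}"
    by (simp_all add: l_part_def u_part_def restr_def zero_diag_def)
  then show ?thesis
    using False by (simp add: mem_Dp_iff Dbar_def zero_diag_def)
qed (simp add: Dp_def Dbar_def zero_diag_def u_part_def restr_def)

lemma u_part_subset_l_part:
  assumes "\<zeta> \<in> Dbar A" "\<forall>i\<in>fst (l_part d A \<infinity> \<zeta>). z i \<in> A"
  shows "fst (u_part d A \<delta> \<zeta>)
    \<subseteq> fst (u_part d A \<infinity> \<zeta>) \<union> {i\<in>fst (l_part d A \<infinity> \<zeta>). \<delta> \<le> d (snd \<zeta> i) (z i)}"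
proof
  fix i assume "i \<in> fst (u_part d A \<delta> \<zeta>)"
  then have i: "i \<in> fst \<zeta>" "\<delta> \<le> setdist_pt d (snd \<zeta> i) A"
    by (auto simp: fst_u_part)
  show "i \<in> fst (u_part d A \<infinity> \<zeta>) \<union> {i\<in>fst (l_part d A \<infinity> \<zeta>). \<delta> \<le> d (snd \<zeta> i) (z i)}"
  proof (cases "setdist_pt d (snd \<zeta> i) A = \<infinity>")
    case False
    then have "i \<in> fst (l_part d A \<infinity> \<zeta>)"
      using i(1) DbarD[OF assms(1) i(1)] by (simp add: fst_l_part_top less_top)
    moreover have "\<delta> \<le> d (snd \<zeta> i) (z i)"
      using calculation i(2) assms(2) setdist_pt_le[of "z i" A d "snd \<zeta> i"] by (auto intro: order_trans)
    ultimately show ?thesis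
      by blast
  qed (use i in \<open>auto simp: fst_u_part\<close>)
qed

lemma Dp_u_part_split:
  assumes "1 \<le> p" "p \<noteq> \<infinity>" "\<zeta> \<in> Dp d A p" "0 < \<eta>"
  obtains F where "finite F"
    "\<And>\<delta>. 0 < \<delta> \<Longrightarrow> \<exists>G. finite G \<and> fst (u_part d A (ennreal \<delta>) \<zeta>) \<subseteq> F \<union> G
                          \<and> real (card G) * \<delta> powr enn2real p \<le> \<eta>"
proof -
  define q where "q = enn2real p"
  have q: "0 < q"
    using one_le_enn2real[OF assms(1,2)] by (simp add: q_def)
  obtain z where zA: "\<forall>i\<in>fst (l_part d A \<infinity> \<zeta>). z i \<in> A"
    and sum: "(\<Sum>\<^sub>\<infinity>i\<in>fst (l_part d A \<infinity> \<zeta>). epow (d (snd \<zeta> i) (z i)) q) < \<infinity>"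
    and fin_u: "finite (fst (u_part d A \<infinity> \<zeta>))" and "\<zeta> \<in> Dbar A"
    using assms(2,3) by (auto simp: mem_Dp_iff q_def)
  define L where "L = fst (l_part d A \<infinity> \<zeta>)"
  define e where "e = (\<lambda>i. epow (d (snd \<zeta> i) (z i)) q)"
  have "infsum e L < \<infinity>"
    using sum by (simp add: e_def L_def)
  moreover have "0 < ennreal \<eta>"
    using assms(4) by simp
  ultimately obtain F0 where F0: "finite F0" "F0 \<subseteq> L" and sparse: "\<And>b. 0 < b \<Longrightarrow>
      finite {i\<in>L - F0. b \<le> e i} \<and> of_nat (card {i\<in>L - F0. b \<le> e i}) * b < ennreal \<eta>"
    by (rule infsum_obtain_sparse_tail) blast
  show ?thesis
  proof (rule that[of "fst (u_part d A \<infinity> \<zeta>) \<union> F0"])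
    show "finite (fst (u_part d A \<infinity> \<zeta>) \<union> F0)"
      using fin_u F0(1) by simp
    fix \<delta> :: real assume "0 < \<delta>"
    define G where "G = {i\<in>L - F0. ennreal (\<delta> powr q) \<le> e i}"
    have "finite G" "ennreal (real (card G) * \<delta> powr q) < ennreal \<eta>"
      using sparse[of "ennreal (\<delta> powr q)"] \<open>0 < \<delta>\<close>
      by (simp_all add: G_def ennreal_mult' ennreal_of_nat_eq_real_of_nat)
    moreover have "fst (u_part d A (ennreal \<delta>) \<zeta>) \<subseteq> fst (u_part d A \<infinity> \<zeta>) \<union> F0 \<union> G"
      using u_part_subset_l_part[OF \<open>\<zeta> \<in> Dbar A\<close> zA, of "ennreal \<delta>"] \<open>0 < \<delta>\<close> q
      by (auto simp: G_def L_def e_def powr_le_epow)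
    ultimately show "\<exists>G. finite G \<and> fst (u_part d A (ennreal \<delta>) \<zeta>) \<subseteq> fst (u_part d A \<infinity> \<zeta>) \<union> F0 \<union> G
        \<and> real (card G) * \<delta> powr enn2real p \<le> \<eta>"
      by (auto simp: q_def ennreal_less_iff)
  qed
qed

lemma finite_u_part:
  assumes "1 \<le> p" "\<zeta> \<in> Dp d A p" "0 < \<delta>"
  shows "finite (fst (u_part d A (ennreal \<delta>) \<zeta>))"
proof (cases "p = \<infinity>")
  case False
  obtain F where "finite F" "\<And>\<delta>. 0 < \<delta> \<Longrightarrow> \<exists>G. finite G \<and> fst (u_part d A (ennreal \<delta>) \<zeta>) \<subseteq> F \<union> G
      \<and> real (card G) * \<delta> powr enn2real p \<le> 1"
    using Dp_u_part_split[OF assms(1) False assms(2) zero_less_one] by blast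
  then show ?thesis
    using assms(3) by (meson finite_UnI finite_subset)
qed (use assms in \<open>simp add: Dp_def\<close>)

section \<open>Adding copies of a point\<close>

definition copy_indices :: "nat \<Rightarrow> nat set" where
  "copy_indices N = {m. odd m \<and> m < 2 * N}"

definition add_copies :: "'a diagram \<Rightarrow> 'a \<Rightarrow> nat \<Rightarrow> 'a diagram" where
  "add_copies \<alpha> x N = ((*) 2 ` fst \<alpha> \<union> copy_indices N, \<lambda>m. if even m then snd \<alpha> (m div 2) else x)"

lemma finite_copy_indices [simp]: "finite (copy_indices N)"
  by (simp add: copy_indices_def)

lemma card_copy_indices [simp]: "card (copy_indices N) = N"
proof -
  have "copy_indices N = (\<lambda>j. 2 * j + 1) ` {..<N}"
    by (auto simp: copy_indices_def elim!: oddE)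
  moreover have "inj_on (\<lambda>j::nat. 2 * j + 1) {..<N}"
    by (auto simp: inj_on_def)
  ultimately show ?thesis
    by (simp add: card_image)
qed

lemma fst_add_copies_diff: "fst (add_copies \<alpha> x N) - (*) 2 ` fst \<alpha> = copy_indices N"
  by (auto simp: add_copies_def copy_indices_def)

lemma snd_add_copies_copy: "j \<in> copy_indices N \<Longrightarrow> snd (add_copies \<alpha> x N) j = x"
  by (simp add: add_copies_def copy_indices_def)

lemma snd_add_copies_double [simp]: "snd (add_copies \<alpha> x N) (2 * k) = snd \<alpha> k"
  by (simp add: add_copies_def)

lemma copy_indices_subset_u_part:
  "\<delta> \<le> setdist_pt d x A \<Longrightarrow> copy_indices N \<subseteq> fst (u_part d A \<delta> (add_copies \<alpha> x N))"
  by (auto simp: fst_u_part add_copies_def copy_indices_def)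

lemma fst_restr_add_copies:
  "fst (restr S (add_copies \<alpha> x N)) \<subseteq> (*) 2 ` fst (restr S \<alpha>) \<union> copy_indices N"
  by (auto simp: restr_def add_copies_def)

lemma add_copies_matching:
  "a \<in> A \<Longrightarrow> is_matching A \<alpha> (add_copies \<alpha> x N) (fst \<alpha>) ((*) 2) (\<lambda>_. a) (\<lambda>_. a)"
  by (auto simp: is_matching_def add_copies_def inj_on_def)

lemma Wp_add_copies_inf:
  assumes "emetric d" "a \<in> A"
  shows "Wp d A \<infinity> \<alpha> (add_copies \<alpha> x N) \<le> d a x"
proof -
  have "Wp d A \<infinity> \<alpha> (add_copies \<alpha> x N)
      \<le> match_cost d \<infinity> \<alpha> (add_copies \<alpha> x N) (fst \<alpha>) ((*) 2) (\<lambda>_. a) (\<lambda>_. a)"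
    by (rule Wp_le_match_cost[OF add_copies_matching[OF assms(2)]])
  also have "\<dots> \<le> d a x"
    using assms(1)
    by (auto simp: match_cost_def fst_add_copies_diff snd_add_copies_copy emetric_def intro!: SUP_least)
  finally show ?thesis .
qed

lemma Wp_add_copies_le:
  assumes "emetric d" "a \<in> A" "p \<noteq> \<infinity>" "0 < enn2real p" "d a x \<le> ennreal D" "0 \<le> D"
  shows "Wp d A p \<alpha> (add_copies \<alpha> x N) \<le> ennreal ((real N * D powr enn2real p) powr (1 / enn2real p))"
proof -
  define q where "q = enn2real p"
  have q: "0 < q"
    using assms(4) by (simp add: q_def)
  have "(\<Sum>\<^sub>\<infinity>j\<in>copy_indices N. epow (d a (snd (add_copies \<alpha> x N) j)) q)
      = (\<Sum>\<^sub>\<infinity>j\<in>copy_indices N. epow (d a x) q)"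
    by (rule infsum_cong) (simp add: snd_add_copies_copy)
  also have "\<dots> \<le> of_nat N * ennreal (D powr q)"
    using epow_mono[OF assms(5) q] assms(6) by (simp add: epow_ennreal mult_left_mono)
  finally have copies: "(\<Sum>\<^sub>\<infinity>j\<in>copy_indices N. epow (d a (snd (add_copies \<alpha> x N) j)) q)
      \<le> ennreal (real N * D powr q)"
    by (simp add: ennreal_mult' ennreal_of_nat_eq_real_of_nat)
  have "Wp d A p \<alpha> (add_copies \<alpha> x N)
      \<le> match_cost d p \<alpha> (add_copies \<alpha> x N) (fst \<alpha>) ((*) 2) (\<lambda>_. a) (\<lambda>_. a)"
    by (rule Wp_le_match_cost[OF add_copies_matching[OF assms(2)]])
  also have "\<dots> = epow (\<Sum>\<^sub>\<infinity>j\<in>copy_indices N. epow (d a (snd (add_copies \<alpha> x N) j)) q) (1 / q)"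
  proof -
    have "epow (d y y) q = 0" for y
      using assms(1) q by (simp add: emetric_def epow_def)
    then show ?thesis
      using assms(3) by (simp add: match_cost_def Let_def fst_add_copies_diff q_def)
  qed
  also have "\<dots> \<le> epow (ennreal (real N * D powr q)) (1 / q)"
    using copies q by (simp add: epow_mono)
  also have "\<dots> = ennreal ((real N * D powr q) powr (1 / q))"
    using assms(6) by (simp add: epow_ennreal)
  finally show ?thesis
    by (simp add: q_def)
qed

lemma add_copies_in_Dbar: "\<alpha> \<in> Dbar A \<Longrightarrow> x \<notin> A \<Longrightarrow> add_copies \<alpha> x N \<in> Dbar A"
  by (cases \<alpha>) (auto simp: add_copies_def Dbar_def copy_indices_def)

lemma finite_u_part_add_copies:
  "finite (fst (u_part d A \<delta> \<alpha>)) \<Longrightarrow> finite (fst (u_part d A \<delta> (add_copies \<alpha> x N)))"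
  using fst_restr_add_copies[of "- thick d A \<delta>" \<alpha> x N] by (auto simp: u_part_def intro: finite_subset)

lemma add_copies_in_Dp:
  assumes "\<alpha> \<in> Dp d A p" "x \<notin> A" "a \<in> A" "d x a < \<infinity>"
  shows "add_copies \<alpha> x N \<in> Dp d A p"
proof (cases "p = \<infinity>")
  case True
  then show ?thesis
    using assms(1,2) Dp_subset_Dbar by (auto simp: Dp_def add_copies_in_Dbar finite_u_part_add_copies)
next
  case False
  define \<zeta> where "\<zeta> = add_copies \<alpha> x N"
  define q where "q = enn2real p"
  define L where "L = fst (l_part d A \<infinity> \<alpha>)"
  obtain z where zA: "\<forall>i\<in>L. z i \<in> A" and sum: "(\<Sum>\<^sub>\<infinity>i\<in>L. epow (d (snd \<alpha> i) (z i)) q) < \<infinity>"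
    using assms(1) False by (auto simp: mem_Dp_iff L_def q_def)
  define z' where "z' m = (if even m then z (m div 2) else a)" for m
  define f where "f = (\<lambda>m. epow (d (snd \<zeta> m) (z' m)) q)"
  have sub: "fst (l_part d A \<infinity> \<zeta>) \<subseteq> (*) 2 ` L \<union> copy_indices N"
    using fst_restr_add_copies[of "thick d A \<infinity> - A" \<alpha> x N] by (simp add: \<zeta>_def L_def l_part_def)
  then have "\<forall>i\<in>fst (l_part d A \<infinity> \<zeta>). z' i \<in> A"
    using zA assms(3) by (auto simp: z'_def copy_indices_def)
  have "infsum f (fst (l_part d A \<infinity> \<zeta>)) \<le> infsum f ((*) 2 ` L \<union> copy_indices N)"
    using sub by (intro infsum_mono_neutral) (auto intro: nonneg_summable_on_complete)
  also have "\<dots> = infsum f ((*) 2 ` L) + infsum f (copy_indices N)"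
    by (intro infsum_Un_disjoint) (auto simp: copy_indices_def intro: nonneg_summable_on_complete)
  also have "infsum f ((*) 2 ` L) = (\<Sum>\<^sub>\<infinity>i\<in>L. epow (d (snd \<alpha> i) (z i)) q)"
    by (subst infsum_reindex) (auto simp: inj_on_def o_def f_def \<zeta>_def z'_def)
  also have "infsum f (copy_indices N) = (\<Sum>\<^sub>\<infinity>j\<in>copy_indices N. epow (d x a) q)"
    by (rule infsum_cong) (simp add: f_def \<zeta>_def z'_def snd_add_copies_copy, simp add: copy_indices_def)
  also have "\<dots> = of_nat N * epow (d x a) q"
    by simp
  finally have "infsum f (fst (l_part d A \<infinity> \<zeta>)) < \<infinity>"
    using sum assms(4) by (simp add: epow_less_top_iff ennreal_mult_less_top of_nat_less_top le_less_trans)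
  then show ?thesis
    using False assms(1,2) Dp_subset_Dbar \<open>\<forall>i\<in>fst (l_part d A \<infinity> \<zeta>). z' i \<in> A\<close>
    by (auto simp: mem_Dp_iff \<zeta>_def f_def q_def add_copies_in_Dbar finite_u_part_add_copies)
qed

lemma card_u_part_add_copies:
  assumes "1 \<le> p" "add_copies \<alpha> x N \<in> Dp d A p" "0 < r" "ennreal r \<le> setdist_pt d x A"
  shows "N \<le> card (fst (u_part d A (ennreal r) (add_copies \<alpha> x N)))"
proof -
  have "card (copy_indices N) \<le> card (fst (u_part d A (ennreal r) (add_copies \<alpha> x N)))"
    using finite_u_part[OF assms(1-3)] copy_indices_subset_u_part[OF assms(4)] by (rule card_mono)
  then show ?thesis
    by simp
qed

section \<open>The case \<open>p = \<infinity>\<close>\<close>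

definition few_far_points :: "('a \<Rightarrow> 'a \<Rightarrow> ennreal) \<Rightarrow> 'a set \<Rightarrow> real \<Rightarrow> nat \<Rightarrow> 'a diagram set" where
  "few_far_points d A c t =
     {\<zeta>\<in>Dp d A \<infinity>. \<exists>r. 0 < r \<and> r < c \<and> card (fst (u_part d A (ennreal r) \<zeta>)) < t}"

lemma openin_few_far_points:
  assumes "emetric d"
  shows "openin (Wp_topology d A \<infinity>) (few_far_points d A c t)"
  unfolding openin_Wp_topology
proof (intro conjI ballI)
  fix \<zeta> assume "\<zeta> \<in> few_far_points d A c t"
  then obtain r where \<zeta>: "\<zeta> \<in> Dp d A \<infinity>" and r: "0 < r" "r < c"
    and card: "card (fst (u_part d A (ennreal r) \<zeta>)) < t"
    by (auto simp: few_far_points_def)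
  define \<tau> where "\<tau> = (c - r) / 2"
  have \<tau>: "0 < \<tau>" "r + \<tau> < c"
    using r by (simp_all add: \<tau>_def field_simps)
  have "\<beta> \<in> few_far_points d A c t" if \<beta>: "\<beta> \<in> Dp d A \<infinity>" "Wp d A \<infinity> \<zeta> \<beta> < ennreal \<tau>" for \<beta>
  proof -
    obtain K \<phi> z w where m: "is_matching A \<zeta> \<beta> K \<phi> z w"
      and cost: "match_cost d \<infinity> \<zeta> \<beta> K \<phi> z w < ennreal \<tau>"
      using \<beta>(2) by (rule Wp_lessE)
    have no_bad: "{k\<in>K. ennreal \<tau> \<le> d (snd \<zeta> k) (snd \<beta> (\<phi> k))} = {}"
      "{j\<in>fst \<beta> - \<phi> ` K. ennreal \<tau> \<le> d (w j) (snd \<beta> j)} = {}"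
      using match_cost_inf_lessD[OF cost] by (auto simp: not_le[symmetric])
    have "finite (fst (u_part d A (ennreal r) \<zeta>))"
      using finite_u_part[OF _ \<zeta> r(1)] by simp
    then have "card (fst (u_part d A (ennreal r + ennreal \<tau>) \<beta>)) \<le> card (fst (u_part d A (ennreal r) \<zeta>))
        + card {k\<in>K. ennreal \<tau> \<le> d (snd \<zeta> k) (snd \<beta> (\<phi> k))}
        + card {j\<in>fst \<beta> - \<phi> ` K. ennreal \<tau> \<le> d (w j) (snd \<beta> j)}"
      by (rule card_u_part_matching_le[OF assms m]) (unfold no_bad, simp_all)
    then have "card (fst (u_part d A (ennreal r + ennreal \<tau>) \<beta>)) \<le> card (fst (u_part d A (ennreal r) \<zeta>))"
      unfolding no_bad by simp
    then show ?thesis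
      using \<beta>(1) \<tau> r card unfolding few_far_points_def
      by (intro CollectI conjI exI[of _ "r + \<tau>"]) (auto simp: ennreal_plus[symmetric] simp del: ennreal_plus)
  qed
  then show "\<exists>\<epsilon>>0. \<forall>\<beta>\<in>Dp d A \<infinity>. Wp d A \<infinity> \<zeta> \<beta> < \<epsilon> \<longrightarrow> \<beta> \<in> few_far_points d A c t"
    using \<tau>(1) by (intro exI[of _ "ennreal \<tau>"]) auto
qed (auto simp: few_far_points_def)

lemma incseq_few_far_points: "incseq (few_far_points d A c)"
  unfolding incseq_def few_far_points_def by (blast intro: less_le_trans)

lemma Dp_subset_few_far_points:
  assumes "0 < c"
  shows "Dp d A \<infinity> \<subseteq> (\<Union>t. few_far_points d A c t)"
proof
  fix \<zeta> assume "\<zeta> \<in> Dp d A \<infinity>"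
  then have "\<zeta> \<in> few_far_points d A c (Suc (card (fst (u_part d A (ennreal (c / 2)) \<zeta>))))"
    unfolding few_far_points_def using assms by (intro CollectI conjI exI[of _ "c / 2"]) auto
  then show "\<zeta> \<in> (\<Union>t. few_far_points d A c t)"
    by blast
qed

lemma Wp_inf_ball_not_compactin:
  assumes mp: "metric_pair d A" and ni: "\<not> isolated_set d A"
    and \<alpha>: "\<alpha> \<in> Dp d A \<infinity>" and \<epsilon>: "0 < \<epsilon>"
    and ball: "\<forall>\<beta>\<in>Dp d A \<infinity>. Wp d A \<infinity> \<alpha> \<beta> < \<epsilon> \<longrightarrow> \<beta> \<in> K"
  shows "\<not> compactin (Wp_topology d A \<infinity>) K"
proof
  assume cK: "compactin (Wp_topology d A \<infinity>) K"
  have em: "emetric d"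
    using mp by (simp add: metric_pair_def)
  obtain e where e: "0 < e" "ennreal e < \<epsilon>"
    using \<epsilon> by (rule ennreal_obtain_real_below)
  obtain x c where x: "x \<notin> A" "setdist_pt d x A = ennreal c" "0 < c" "c < e"
    using mp ni e(1) by (rule exists_point_near_A)
  have "K \<subseteq> Dp d A \<infinity>"
    using cK by (simp add: compactin_def topspace_Wp_topology)
  then have "K \<subseteq> (\<Union>t. few_far_points d A c t)"
    using Dp_subset_few_far_points[OF x(3), where d=d and A=A] by blast
  then obtain t where Kt: "K \<subseteq> few_far_points d A c t"
    by (rule compactin_subset_incseq[OF cK openin_few_far_points[OF em] incseq_few_far_points])
  have "setdist_pt d x A < ennreal e"
    using x(2-4) by (simp add: ennreal_lessI)
  then obtain a where a: "a \<in> A" "d x a < ennreal e"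
    by (rule setdist_pt_lessE)
  define \<zeta> where "\<zeta> = add_copies \<alpha> x t"
  have "d x a < \<infinity>"
    using a(2) ennreal_less_top[of e] unfolding infinity_ennreal_def by order
  then have \<zeta>: "\<zeta> \<in> Dp d A \<infinity>"
    unfolding \<zeta>_def by (rule add_copies_in_Dp[OF \<alpha> x(1) a(1)])
  have "Wp d A \<infinity> \<alpha> \<zeta> \<le> d a x"
    unfolding \<zeta>_def by (rule Wp_add_copies_inf[OF em a(1)])
  also have "\<dots> = d x a"
    using em by (metis emetric_def)
  also have "\<dots> < \<epsilon>"
    using a(2) e(2) by (rule order.strict_trans)
  finally have "\<zeta> \<in> few_far_points d A c t"
    using ball \<zeta> Kt by blast
  then obtain r where r: "0 < r" "r < c" and card: "card (fst (u_part d A (ennreal r) \<zeta>)) < t"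
    by (auto simp: few_far_points_def)
  have "t \<le> card (fst (u_part d A (ennreal r) \<zeta>))"
    unfolding \<zeta>_def using card_u_part_add_copies[OF _ \<zeta>[unfolded \<zeta>_def] r(1)] x(2) less_imp_le[OF r(2)]
    by (simp add: ennreal_leI)
  then show False
    using card by simp
qed

section \<open>The case \<open>p < \<infinity>\<close>\<close>

text \<open>A weak-\<open>\<ell>\<^sup>q\<close> bound, at the scales \<open>s \<le> r\<close>, on the distances from the points of \<open>\<zeta>\<close> to \<open>A\<close>.\<close>

definition weak_bound :: "('a \<Rightarrow> 'a \<Rightarrow> ennreal) \<Rightarrow> 'a set \<Rightarrow> real \<Rightarrow> 'a diagram \<Rightarrow> real \<Rightarrow> real \<Rightarrow> real \<Rightarrow> bool"
  where "weak_bound d A q \<zeta> \<gamma> r \<theta> \<longleftrightarrow>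
    (\<forall>s. 0 < s \<and> s \<le> r \<longrightarrow> s powr q * real (card (fst (u_part d A (ennreal (\<gamma> * s)) \<zeta>))) \<le> \<theta>)"

lemma weak_bound_mono: "weak_bound d A q \<zeta> \<gamma> r \<theta> \<Longrightarrow> r' \<le> r \<Longrightarrow> weak_bound d A q \<zeta> \<gamma> r' \<theta>"
  by (auto simp: weak_bound_def)

lemma weak_bound_eventually:
  assumes "1 \<le> p" "p \<noteq> \<infinity>" "\<zeta> \<in> Dp d A p" "0 < \<gamma>" "0 < \<eta>"
  obtains r where "0 < r" "weak_bound d A (enn2real p) \<zeta> \<gamma> r \<eta>"
proof -
  define q where "q = enn2real p"
  have q: "1 \<le> q"
    using one_le_enn2real[OF assms(1,2)] by (simp add: q_def)
  have "0 < \<eta> / 2 * \<gamma> powr q"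
    using assms(4,5) by simp
  then obtain F where F: "finite F" and split: "\<And>\<delta>. 0 < \<delta> \<Longrightarrow> \<exists>G. finite G
      \<and> fst (u_part d A (ennreal \<delta>) \<zeta>) \<subseteq> F \<union> G \<and> real (card G) * \<delta> powr q \<le> \<eta> / 2 * \<gamma> powr q"
    using Dp_u_part_split[OF assms(1-3)] unfolding q_def by blast
  define r where "r = (\<eta> / (2 * (real (card F) + 1))) powr (1 / q)"
  have r: "0 < r" "r powr q = \<eta> / (2 * (real (card F) + 1))"
    using q assms(5) by (simp_all add: r_def powr_powr)
  have "weak_bound d A q \<zeta> \<gamma> r \<eta>"
    unfolding weak_bound_def
  proof (intro allI impI)
    fix s assume s: "0 < s \<and> s \<le> r"
    obtain G where G: "finite G" "fst (u_part d A (ennreal (\<gamma> * s)) \<zeta>) \<subseteq> F \<union> G"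
      "real (card G) * (\<gamma> * s) powr q \<le> \<eta> / 2 * \<gamma> powr q"
      using split[of "\<gamma> * s"] s assms(4) by auto
    have "card (fst (u_part d A (ennreal (\<gamma> * s)) \<zeta>)) \<le> card (F \<union> G)"
      using F G by (intro card_mono) auto
    also have "\<dots> \<le> card F + card G"
      by (rule card_Un_le)
    finally have "s powr q * real (card (fst (u_part d A (ennreal (\<gamma> * s)) \<zeta>)))
        \<le> s powr q * real (card F) + s powr q * real (card G)"
      by (simp add: distrib_left[symmetric] mult_left_mono)
    also have "s powr q * real (card F) \<le> \<eta> / 2"
    proof -
      have "s powr q * real (card F) \<le> r powr q * real (card F)"
        using s q by (intro mult_right_mono powr_mono2) auto
      also have "\<dots> = \<eta> / 2 * (real (card F) / (real (card F) + 1))"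
        using r(2) by simp
      also have "\<dots> \<le> \<eta> / 2"
        using assms(5) by (intro mult_left_le) auto
      finally show ?thesis .
    qed
    also have "s powr q * real (card G) \<le> \<eta> / 2"
      using G(3) assms(4) s by (simp add: powr_mult field_simps)
    finally show "s powr q * real (card (fst (u_part d A (ennreal (\<gamma> * s)) \<zeta>))) \<le> \<eta>"
      by simp
  qed
  then show ?thesis
    using that r(1) by (simp add: q_def)
qed

lemma card_u_part_Wp_le:
  assumes em: "emetric d" and p: "1 \<le> p" "p \<noteq> \<infinity>" and \<zeta>: "\<zeta> \<in> Dp d A p"
    and \<delta>: "0 < \<delta>" and \<tau>: "0 < \<tau>" and c: "0 < c" and near: "Wp d A p \<zeta> \<beta> < ennreal c"
  shows "real (card (fst (u_part d A (ennreal (\<delta> + \<tau>)) \<beta>))) * \<tau> powr enn2real p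
    \<le> real (card (fst (u_part d A (ennreal \<delta>) \<zeta>))) * \<tau> powr enn2real p + c powr enn2real p"
proof -
  obtain K \<phi> z w where m: "is_matching A \<zeta> \<beta> K \<phi> z w"
    and cost: "match_cost d p \<zeta> \<beta> K \<phi> z w < ennreal c"
    using near by (rule Wp_lessE)
  define B1 where "B1 = {k\<in>K. ennreal \<tau> \<le> d (snd \<zeta> k) (snd \<beta> (\<phi> k))}"
  define B2 where "B2 = {j\<in>fst \<beta> - \<phi> ` K. ennreal \<tau> \<le> d (w j) (snd \<beta> j)}"
  have "0 < enn2real p"
    using one_le_enn2real[OF p] by simp
  note bad = card_costly_pairs_le[OF p(2) this cost c \<tau>, folded B1_def B2_def]
  have "card (fst (u_part d A (ennreal \<delta> + ennreal \<tau>) \<beta>))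
      \<le> card (fst (u_part d A (ennreal \<delta>) \<zeta>)) + card B1 + card B2"
    using card_u_part_matching_le[OF em m finite_u_part[OF p(1) \<zeta> \<delta>]] bad(1,2)
    by (simp add: B1_def B2_def)
  then have "real (card (fst (u_part d A (ennreal (\<delta> + \<tau>)) \<beta>))) * \<tau> powr enn2real p
      \<le> (real (card (fst (u_part d A (ennreal \<delta>) \<zeta>))) + real (card B1 + card B2)) * \<tau> powr enn2real p"
    using \<delta> \<tau> by (intro mult_right_mono) (simp_all add: ennreal_plus)
  then show ?thesis
    using bad(3) by (simp add: algebra_simps)
qed

lemma weak_bound_perturb:
  assumes em: "emetric d" and p: "1 \<le> p" "p \<noteq> \<infinity>" and \<zeta>: "\<zeta> \<in> Dp d A p"
    and wb: "weak_bound d A (enn2real p) \<zeta> \<gamma> r \<theta>" and \<gamma>: "0 < \<gamma>" "\<gamma> < 1" and \<rho>: "0 < \<rho>"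
  obtains \<epsilon> where "0 < \<epsilon>"
    "\<And>\<beta>. Wp d A p \<zeta> \<beta> < \<epsilon> \<Longrightarrow> weak_bound d A (enn2real p) \<beta> ((1 + \<gamma>) / 2) r (\<theta> + \<rho>)"
proof -
  define q where "q = enn2real p"
  have q: "1 \<le> q"
    using one_le_enn2real[OF p] by (simp add: q_def)
  define \<kappa> where "\<kappa> = (1 - \<gamma>) / 2"
  have \<kappa>: "0 < \<kappa>"
    using \<gamma> by (simp add: \<kappa>_def)
  define c where "c = \<rho> powr (1 / q) * \<kappa>"
  have c: "0 < c" "c powr q = \<rho> * \<kappa> powr q"
    using q \<rho> \<kappa> by (simp_all add: c_def powr_mult powr_powr)
  have "weak_bound d A q \<beta> ((1 + \<gamma>) / 2) r (\<theta> + \<rho>)"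
    if \<beta>: "Wp d A p \<zeta> \<beta> < ennreal c" for \<beta>
    unfolding weak_bound_def
  proof (intro allI impI)
    fix s assume s: "0 < s \<and> s \<le> r"
    define U where "U = fst (u_part d A (ennreal ((1 + \<gamma>) / 2 * s)) \<beta>)"
    define T where "T = fst (u_part d A (ennreal (\<gamma> * s)) \<zeta>)"
    have scale: "\<gamma> * s + \<kappa> * s = (1 + \<gamma>) / 2 * s"
      by (simp add: \<kappa>_def field_simps)
    have "real (card U) * (\<kappa> * s) powr q \<le> real (card T) * (\<kappa> * s) powr q + c powr q"
      using card_u_part_Wp_le[OF em p \<zeta> _ _ c(1) \<beta>, of "\<gamma> * s" "\<kappa> * s", unfolded scale] \<gamma> \<kappa> s
      by (simp add: U_def T_def q_def)
    then have "(s powr q * real (card U)) * \<kappa> powr q \<le> (s powr q * real (card T) + \<rho>) * \<kappa> powr q"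
      using \<kappa> s c(2) by (simp add: powr_mult algebra_simps)
    then have "s powr q * real (card U) \<le> s powr q * real (card T) + \<rho>"
      by (rule mult_right_le_imp_le) (use \<kappa> in simp)
    also have "\<dots> \<le> \<theta> + \<rho>"
      using wb s by (simp add: weak_bound_def T_def q_def)
    finally show "s powr q * real (card U) \<le> \<theta> + \<rho>" .
  qed
  then show ?thesis
    using that[of "ennreal c"] c(1) by (simp add: q_def)
qed

lemma exists_nat_mult_between:
  fixes a b h :: real
  assumes "0 \<le> a" "0 < h" "a + h \<le> b"
  obtains N :: nat where "a \<le> real N * h" "real N * h < b"
proof
  define N where "N = nat \<lceil>a / h\<rceil>"
  have "real N = of_int \<lceil>a / h\<rceil>"
    using assms(1,2) by (simp add: N_def)
  then have "a / h \<le> real N" "real N < a / h + 1"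
    by linarith+
  then show "a \<le> real N * h" "real N * h < b"
    using assms by (simp_all add: field_simps)
qed

lemma exists_copy_count:
  fixes q e c :: real
  assumes q: "1 \<le> q" and e: "0 < e" and c: "0 < c" "c \<le> e / 4"
  obtains N :: nat where "(e / 4) powr q / 2 \<le> (c / 2) powr q * real N"
    "(real N * (2 * c) powr q) powr (1 / q) < e"
proof -
  have "c powr q \<le> (e / 4) powr q"
    using c q by (intro powr_mono2) auto
  also have "\<dots> = (e / 2) powr q / 2 powr q"
    using e by (simp add: powr_divide[symmetric])
  also have "\<dots> \<le> (e / 2) powr q / 2"
  proof -
    have "2 \<le> 2 powr q"
      using powr_mono[of 1 q 2] q by simp
    then show ?thesis
      by (rule divide_left_mono) simp_all
  qed
  finally have "(e / 2) powr q / 2 + c powr q \<le> (e / 2) powr q"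
    by simp
  moreover have "0 \<le> (e / 2) powr q / 2" "0 < c powr q"
    using c by simp_all
  ultimately obtain N :: nat
    where N: "(e / 2) powr q / 2 \<le> real N * c powr q" "real N * c powr q < (e / 2) powr q"
    using exists_nat_mult_between by metis
  show ?thesis
  proof
    have "(e / 4) powr q / 2 = (e / 2) powr q / 2 / 2 powr q"
      using e by (simp add: powr_divide[symmetric])
    also have "\<dots> \<le> real N * c powr q / 2 powr q"
      using divide_right_mono[OF N(1), of "2 powr q"] by simp
    also have "\<dots> = (c / 2) powr q * real N"
      using c by (simp add: powr_divide)
    finally show "(e / 4) powr q / 2 \<le> (c / 2) powr q * real N" .
    have "real N * (2 * c) powr q = 2 powr q * (real N * c powr q)"
      using c by (simp add: powr_mult)
    also have "\<dots> < 2 powr q * (e / 2) powr q"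
      using N(2) by simp
    also have "\<dots> = e powr q"
      using e by (simp add: powr_mult[symmetric])
    finally have "(real N * (2 * c) powr q) powr (1 / q) < (e powr q) powr (1 / q)"
      using q by (intro powr_less_mono2) auto
    then show "(real N * (2 * c) powr q) powr (1 / q) < e"
      using e q by (simp add: powr_powr)
  qed
qed

lemma exists_near_crowded_diagram:
  assumes mp: "metric_pair d A" and ni: "\<not> isolated_set d A" and p: "1 \<le> p" "p \<noteq> \<infinity>"
    and \<alpha>: "\<alpha> \<in> Dp d A p" and e: "0 < e" and r: "0 < r"
  obtains \<zeta> s where "\<zeta> \<in> Dp d A p" "Wp d A p \<alpha> \<zeta> < ennreal e" "0 < s" "s \<le> r"
    "(e / 4) powr enn2real p / 2 \<le> s powr enn2real p * real (card (fst (u_part d A (ennreal (2 * s)) \<zeta>)))"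
proof -
  define q where "q = enn2real p"
  have q: "1 \<le> q"
    using one_le_enn2real[OF p] by (simp add: q_def)
  have em: "emetric d"
    using mp by (simp add: metric_pair_def)
  obtain x c where x: "x \<notin> A" "setdist_pt d x A = ennreal c" "0 < c" "c < min r (e / 4)"
    using exists_point_near_A[OF mp ni, of "min r (e / 4)"] r e by auto
  obtain N where N: "(e / 4) powr q / 2 \<le> (c / 2) powr q * real N"
    "(real N * (2 * c) powr q) powr (1 / q) < e"
    using exists_copy_count[OF q e x(3)] x(4) by auto
  have "setdist_pt d x A < ennreal (2 * c)"
    using x(2,3) by (simp add: ennreal_lessI)
  then obtain a where a: "a \<in> A" "d x a < ennreal (2 * c)"
    by (rule setdist_pt_lessE)
  define \<zeta> where "\<zeta> = add_copies \<alpha> x N"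
  have "d x a < \<infinity>"
    using a(2) ennreal_less_top[of "2 * c"] unfolding infinity_ennreal_def by order
  then have \<zeta>: "\<zeta> \<in> Dp d A p"
    unfolding \<zeta>_def by (rule add_copies_in_Dp[OF \<alpha> x(1) a(1)])
  have "d a x = d x a"
    using em by (metis emetric_def)
  then have "Wp d A p \<alpha> \<zeta> \<le> ennreal ((real N * (2 * c) powr q) powr (1 / q))"
    using Wp_add_copies_le[OF em a(1) p(2)] a(2) q x(3) by (simp add: \<zeta>_def q_def)
  also have "\<dots> < ennreal e"
    using N(2) e by (simp add: ennreal_lessI)
  finally have near: "Wp d A p \<alpha> \<zeta> < ennreal e" .
  have "N \<le> card (fst (u_part d A (ennreal (2 * (c / 2))) \<zeta>))"
    unfolding \<zeta>_def using card_u_part_add_copies[OF p(1) \<zeta>[unfolded \<zeta>_def]] x(2,3) by simp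
  then have "(c / 2) powr q * real N \<le> (c / 2) powr q * real (card (fst (u_part d A (ennreal (2 * (c / 2))) \<zeta>)))"
    by (intro mult_left_mono) simp_all
  then have "(e / 4) powr q / 2 \<le> (c / 2) powr q * real (card (fst (u_part d A (ennreal (2 * (c / 2))) \<zeta>)))"
    using N(1) by linarith
  then show ?thesis
    using x(3,4) by (intro that[OF \<zeta> near, of "c / 2"]) (simp_all add: q_def)
qed

text \<open>The slack in the scale factor \<open>\<gamma> < 1\<close> and in the bound \<open>\<theta> - \<rho> < \<theta>\<close> is what makes these
  sets open: a small perturbation only enlarges \<open>\<gamma>\<close> to \<open>(1 + \<gamma>) / 2\<close> and spends half of \<open>\<rho>\<close>.\<close>

definition weakly_sparse :: "('a \<Rightarrow> 'a \<Rightarrow> ennreal) \<Rightarrow> 'a set \<Rightarrow> ennreal \<Rightarrow> real \<Rightarrow> real \<Rightarrow> 'a diagram set" where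
  "weakly_sparse d A p \<theta> r = {\<zeta>\<in>Dp d A p. \<exists>\<gamma> \<rho>. 0 < \<gamma> \<and> \<gamma> < 1 \<and> 0 < \<rho>
      \<and> weak_bound d A (enn2real p) \<zeta> \<gamma> r (\<theta> - \<rho>)}"

lemma openin_weakly_sparse:
  assumes em: "emetric d" and p: "1 \<le> p" "p \<noteq> \<infinity>"
  shows "openin (Wp_topology d A p) (weakly_sparse d A p \<theta> r)"
  unfolding openin_Wp_topology
proof (intro conjI ballI)
  fix \<zeta> assume "\<zeta> \<in> weakly_sparse d A p \<theta> r"
  then obtain \<gamma> \<rho> where \<zeta>: "\<zeta> \<in> Dp d A p" and \<gamma>: "0 < \<gamma>" "\<gamma> < 1" and \<rho>: "0 < \<rho>"
    and wb: "weak_bound d A (enn2real p) \<zeta> \<gamma> r (\<theta> - \<rho>)"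
    by (auto simp: weakly_sparse_def)
  obtain \<epsilon> where "0 < \<epsilon>" and near: "\<And>\<beta>. Wp d A p \<zeta> \<beta> < \<epsilon> \<Longrightarrow>
      weak_bound d A (enn2real p) \<beta> ((1 + \<gamma>) / 2) r (\<theta> - \<rho> + \<rho> / 2)"
    using weak_bound_perturb[OF em p \<zeta> wb \<gamma> half_gt_zero[OF \<rho>]] by blast
  have "\<beta> \<in> weakly_sparse d A p \<theta> r" if "\<beta> \<in> Dp d A p" "Wp d A p \<zeta> \<beta> < \<epsilon>" for \<beta>
    unfolding weakly_sparse_def using that near[OF that(2)] \<gamma> \<rho>
    by (intro CollectI conjI exI[of _ "(1 + \<gamma>) / 2"] exI[of _ "\<rho> / 2"]) auto
  then show "\<exists>\<epsilon>>0. \<forall>\<beta>\<in>Dp d A p. Wp d A p \<zeta> \<beta> < \<epsilon> \<longrightarrow> \<beta> \<in> weakly_sparse d A p \<theta> r"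
    using \<open>0 < \<epsilon>\<close> by blast
qed (auto simp: weakly_sparse_def)

lemma weakly_sparse_antimono: "r' \<le> r \<Longrightarrow> weakly_sparse d A p \<theta> r \<subseteq> weakly_sparse d A p \<theta> r'"
  unfolding weakly_sparse_def by (blast intro: weak_bound_mono)

lemma Dp_subset_weakly_sparse:
  assumes p: "1 \<le> p" "p \<noteq> \<infinity>" and \<theta>: "0 < \<theta>"
  shows "Dp d A p \<subseteq> (\<Union>n. weakly_sparse d A p \<theta> (inverse (real (Suc n))))"
proof
  fix \<zeta> assume \<zeta>: "\<zeta> \<in> Dp d A p"
  have "0 < (1 / 2 :: real)" "0 < \<theta> / 2"
    using \<theta> by simp_all
  then obtain r where "0 < r" and wb: "weak_bound d A (enn2real p) \<zeta> (1 / 2) r (\<theta> / 2)"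
    by (rule weak_bound_eventually[OF p \<zeta>])
  obtain n where "inverse (real (Suc n)) < r"
    using reals_Archimedean[OF \<open>0 < r\<close>] by blast
  then have "weak_bound d A (enn2real p) \<zeta> (1 / 2) (inverse (real (Suc n))) (\<theta> - \<theta> / 2)"
    using weak_bound_mono[OF wb] by simp
  then have "\<zeta> \<in> weakly_sparse d A p \<theta> (inverse (real (Suc n)))"
    unfolding weakly_sparse_def using \<zeta> \<theta>
    by (intro CollectI conjI exI[of _ "1 / 2"] exI[of _ "\<theta> / 2"]) auto
  then show "\<zeta> \<in> (\<Union>n. weakly_sparse d A p \<theta> (inverse (real (Suc n))))"
    by blast
qed

lemma crowded_not_weakly_sparse:
  assumes p: "1 \<le> p" and s: "0 < s" "s \<le> r"
    and crowded: "\<theta> \<le> s powr enn2real p * real (card (fst (u_part d A (ennreal (2 * s)) \<zeta>)))"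
  shows "\<zeta> \<notin> weakly_sparse d A p \<theta> r"
proof
  assume "\<zeta> \<in> weakly_sparse d A p \<theta> r"
  then obtain \<gamma> \<rho> where \<zeta>: "\<zeta> \<in> Dp d A p" and \<gamma>: "0 < \<gamma>" "\<gamma> < 1" and \<rho>: "0 < \<rho>"
    and wb: "weak_bound d A (enn2real p) \<zeta> \<gamma> r (\<theta> - \<rho>)"
    by (auto simp: weakly_sparse_def)
  have "fst (u_part d A (ennreal (2 * s)) \<zeta>) \<subseteq> fst (u_part d A (ennreal (\<gamma> * s)) \<zeta>)"
    using \<gamma> s by (intro u_part_antimono) simp
  with finite_u_part[OF p \<zeta>, of "\<gamma> * s"] have
    "card (fst (u_part d A (ennreal (2 * s)) \<zeta>)) \<le> card (fst (u_part d A (ennreal (\<gamma> * s)) \<zeta>))"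
    using \<gamma> s by (simp add: card_mono)
  then have "s powr enn2real p * real (card (fst (u_part d A (ennreal (2 * s)) \<zeta>)))
      \<le> s powr enn2real p * real (card (fst (u_part d A (ennreal (\<gamma> * s)) \<zeta>)))"
    by (intro mult_left_mono) simp_all
  also have "\<dots> \<le> \<theta> - \<rho>"
    using wb s by (simp add: weak_bound_def)
  finally show False
    using crowded \<rho> by simp
qed

lemma Wp_fin_ball_not_compactin:
  assumes mp: "metric_pair d A" and ni: "\<not> isolated_set d A" and p: "1 \<le> p" "p \<noteq> \<infinity>"
    and \<alpha>: "\<alpha> \<in> Dp d A p" and \<epsilon>: "0 < \<epsilon>"
    and ball: "\<forall>\<beta>\<in>Dp d A p. Wp d A p \<alpha> \<beta> < \<epsilon> \<longrightarrow> \<beta> \<in> K"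
  shows "\<not> compactin (Wp_topology d A p) K"
proof
  assume cK: "compactin (Wp_topology d A p) K"
  have em: "emetric d"
    using mp by (simp add: metric_pair_def)
  obtain e where e: "0 < e" "ennreal e < \<epsilon>"
    using \<epsilon> by (rule ennreal_obtain_real_below)
  define \<theta> where "\<theta> = (e / 4) powr enn2real p / 2"
  define V where "V n = weakly_sparse d A p \<theta> (inverse (real (Suc n)))" for n
  have "K \<subseteq> Dp d A p"
    using cK by (simp add: compactin_def topspace_Wp_topology)
  then have "K \<subseteq> (\<Union>n. V n)"
    using Dp_subset_weakly_sparse[OF p, where d=d and A=A and \<theta>=\<theta>] e(1)
    unfolding V_def \<theta>_def by fastforce
  moreover have "incseq V"
    unfolding V_def by (intro incseq_SucI weakly_sparse_antimono) (simp add: field_simps)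
  moreover have "openin (Wp_topology d A p) (V n)" for n
    unfolding V_def by (rule openin_weakly_sparse[OF em p])
  ultimately obtain n where Kn: "K \<subseteq> V n"
    using compactin_subset_incseq[OF cK] by metis
  have "0 < inverse (real (Suc n))"
    by simp
  then obtain \<zeta> s where \<zeta>: "\<zeta> \<in> Dp d A p" "Wp d A p \<alpha> \<zeta> < ennreal e"
    and s: "0 < s" "s \<le> inverse (real (Suc n))"
    and crowded: "\<theta> \<le> s powr enn2real p * real (card (fst (u_part d A (ennreal (2 * s)) \<zeta>)))"
    unfolding \<theta>_def using exists_near_crowded_diagram[OF mp ni p \<alpha> e(1)] by blast
  have "Wp d A p \<alpha> \<zeta> < \<epsilon>"
    using \<zeta>(2) e(2) by (rule order.strict_trans)
  then have "\<zeta> \<in> V n"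
    using ball \<zeta>(1) Kn by blast
  then show False
    using crowded_not_weakly_sparse[OF p(1) s crowded] by (simp add: V_def)
qed

lemma Wp_ball_not_compactin:
  assumes "metric_pair d A" "\<not> isolated_set d A" "1 \<le> p" "\<alpha> \<in> Dp d A p" "0 < \<epsilon>"
    "\<forall>\<beta>\<in>Dp d A p. Wp d A p \<alpha> \<beta> < \<epsilon> \<longrightarrow> \<beta> \<in> K"
  shows "\<not> compactin (Wp_topology d A p) K"
proof (cases "p = \<infinity>")
  case True
  then show ?thesis
    using Wp_inf_ball_not_compactin[OF assms(1,2)] assms(4-6) by simp
next
  case False
  then show ?thesis
    using Wp_fin_ball_not_compactin[OF assms(1-3) False assms(4-6)] by simp
qed

theorem theorem7p11:
  fixes d :: "'a \<Rightarrow> 'a \<Rightarrow> ennreal" and A :: "'a set" and p :: ennreal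
  assumes "metric_pair d A"
    and "\<not> isolated_set d A"
    and "1 \<le> p"
  shows "(\<forall>\<alpha>\<in>Dp d A p. \<not> (\<exists>U K. openin (Wp_topology d A p) U \<and> \<alpha> \<in> U \<and> U \<subseteq> K
                                  \<and> compactin (Wp_topology d A p) K))
       \<and> \<not> locally_compact_space (Wp_topology d A p)
       \<and> (\<forall>K. compactin (Wp_topology d A p) K \<longrightarrow> (Wp_topology d A p) interior_of K = {})"
proof -
  have no_compact_nbhd: "\<not> compactin (Wp_topology d A p) K"
    if U: "openin (Wp_topology d A p) U" "\<alpha> \<in> U" "U \<subseteq> K" for \<alpha> U K
  proof -
    obtain \<epsilon> where "0 < \<epsilon>" "\<forall>\<beta>\<in>Dp d A p. Wp d A p \<alpha> \<beta> < \<epsilon> \<longrightarrow> \<beta> \<in> U"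
      using U(1,2) by (auto simp: openin_Wp_topology)
    moreover have "\<alpha> \<in> Dp d A p"
      using U(1,2) by (auto simp: openin_Wp_topology)
    ultimately show ?thesis
      using Wp_ball_not_compactin[OF assms] U(3) by blast
  qed
  moreover have "\<not> locally_compact_space (Wp_topology d A p)"
    using zero_diag_in_Dp no_compact_nbhd
    unfolding locally_compact_space_def topspace_Wp_topology by blast
  moreover have "Wp_topology d A p interior_of K = {}" if "compactin (Wp_topology d A p) K" for K
    using no_compact_nbhd[OF openin_interior_of _ interior_of_subset] that by blast
  ultimately show ?thesis
    by blast
qed

end
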